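(* Let $\Gamma$ be a rational smooth affine curve and let $\sigma\in\mathrm{Aut}(\Gamma)$ be an automorphism of order $2$. Then there exist a closed embedding $\tau\colon\Gamma\to\mathbb{A}^2$ and an automorphism $\hat\sigma\in\mathrm{Aut}(\mathbb{A}^2)$ of order $2$ such that $\hat\sigma\circ\tau=\tau\circ\sigma$.
   Context: All varieties are over $\mathbb{C}$. A rational smooth affine curve is a smooth affine curve isomorphic to $\mathbb{P}^1\setminus\Lambda$ for some non-empty finite set $\Lambda\subset\mathbb{P}^1$. *)

theory Defs
  imports "HOL-Computational_Algebra.Polynomial"
begin

text \<open>Model of a rational smooth affine curve: P^1 minus a non-empty finite set Lambda.
  Moving a point of Lambda to infinity, this is C minus a finite set F
  (F = Lambda minus infinity).\<close>

definition curve :: "complex set \<Rightarrow> complex set" where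
  "curve F = UNIV - F"

definition regular_on :: "complex set \<Rightarrow> (complex \<Rightarrow> complex) \<Rightarrow> bool" where
  "regular_on S h \<longleftrightarrow> (\<exists>p q :: complex poly. \<forall>z\<in>S. poly q z \<noteq> 0 \<and> h z = poly p z / poly q z)"

definition curve_morphism :: "complex set \<Rightarrow> (complex \<Rightarrow> complex) \<Rightarrow> bool" where
  "curve_morphism S f \<longleftrightarrow> f ` S \<subseteq> S \<and> regular_on S f"

definition curve_aut :: "complex set \<Rightarrow> (complex \<Rightarrow> complex) \<Rightarrow> bool" where
  "curve_aut S f \<longleftrightarrow> curve_morphism S f \<and>
     (\<exists>g. curve_morphism S g \<and> (\<forall>z\<in>S. g (f z) = z \<and> f (g z) = z))"

definition curve_involution :: "complex set \<Rightarrow> (complex \<Rightarrow> complex) \<Rightarrow> bool" where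
  "curve_involution S f \<longleftrightarrow> curve_aut S f \<and> (\<forall>z\<in>S. f (f z) = z) \<and> (\<exists>z\<in>S. f z \<noteq> z)"

text \<open>Polynomials in two variables x, y over C are represented as complex poly poly:
  an (outer) polynomial in y with coefficients in C[x].\<close>
definition eval2 :: "complex poly poly \<Rightarrow> complex \<Rightarrow> complex \<Rightarrow> complex" where
  "eval2 P x y = poly (map_poly (\<lambda>c. poly c x) P) y"

definition poly_map2 :: "complex poly poly \<Rightarrow> complex poly poly \<Rightarrow> complex \<times> complex \<Rightarrow> complex \<times> complex" where
  "poly_map2 P Q = (\<lambda>(x, y). (eval2 P x y, eval2 Q x y))"

definition A2_aut :: "(complex \<times> complex \<Rightarrow> complex \<times> complex) \<Rightarrow> bool" where
  "A2_aut \<Phi> \<longleftrightarrow> (\<exists>P Q R T. \<Phi> = poly_map2 P Q \<and>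
      (\<forall>v. poly_map2 R T (\<Phi> v) = v \<and> \<Phi> (poly_map2 R T v) = v))"

definition A2_involution :: "(complex \<times> complex \<Rightarrow> complex \<times> complex) \<Rightarrow> bool" where
  "A2_involution \<Phi> \<longleftrightarrow> A2_aut \<Phi> \<and> \<Phi> \<circ> \<Phi> = id \<and> \<Phi> \<noteq> id"

text \<open>Closed embedding tau = (f, g) : S -> A^2 of the affine curve S: f, g regular and the
  comorphism C[x,y] -> O(S) is surjective (every regular function on S is a polynomial
  in f and g).\<close>
definition closed_embedding_A2 :: "complex set \<Rightarrow> (complex \<Rightarrow> complex \<times> complex) \<Rightarrow> bool" where
  "closed_embedding_A2 S \<tau> \<longleftrightarrow> regular_on S (fst \<circ> \<tau>) \<and> regular_on S (snd \<circ> \<tau>) \<and>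
     (\<forall>h. regular_on S h \<longrightarrow> (\<exists>P. \<forall>z\<in>S. h z = eval2 P (fst (\<tau> z)) (snd (\<tau> z))))"

end

theory Submission
  imports Defs "HOL-Computational_Algebra.Fundamental_Theorem_Algebra"
    "HOL-Computational_Algebra.Polynomial_Factorial" "HOL-Computational_Algebra.Field_as_Ring"
begin

text \<open>An automorphism of \<open>\<complex> - F\<close> is an injective rational function, hence a Moebius
  transformation, and an involution of this kind is either a point reflection \<open>z \<mapsto> c - z\<close> or an
  inversion \<open>z \<mapsto> b + k / (z - b)\<close> about a point \<open>b \<in> F\<close>. A point reflection permutes \<open>F\<close>,
  and \<open>\<tau> z = (z, 1 / Q z)\<close>, with \<open>Q z\<close> the product of the \<open>z - a\<close> for \<open>a \<in> F\<close>, turns it into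
  \<open>(x, y) \<mapsto> (c - x, \<plusminus>y)\<close>.
  For an inversion, the Joukowski functions \<open>t = (z - b) + k / (z - b)\<close> and
  \<open>s = (z - b) - k / (z - b)\<close> are invariant and anti-invariant with \<open>s\<^sup>2 = t\<^sup>2 - 4k\<close>, and
  \<open>\<tau> = (s / (R(t) E1(t)), t)\<close> turns it into \<open>(x, y) \<mapsto> (-x, y)\<close>, where \<open>R\<close> vanishes exactly
  at the values of \<open>t\<close> on \<open>F\<close>. In both cases \<open>\<tau>\<close> is a closed embedding because \<open>z\<close> and all
  \<open>1 / (z - a)\<close>, \<open>a \<in> F\<close>, are polynomials in its coordinates, and these generate the regular
  functions by partial fractions.\<close>

text \<open>Importing \<open>Field_as_Ring\<close> (needed for gcds of complex polynomials) turns these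
  cancellation rules of Euclidean rings into simp rules for complex division, where they undo
  \<open>field_simps\<close> and make the simplifier loop.\<close>
declare div_mult_self1 [simp del] div_mult_self2 [simp del] div_mult_self3 [simp del] div_mult_self4 [simp del]

lemma map_poly_poly_add:
  "map_poly (\<lambda>c. poly c x) (P + Q) = map_poly (\<lambda>c. poly c x) P + map_poly (\<lambda>c. poly c x) Q"
  by (rule poly_eqI) (simp add: coeff_map_poly)

lemma map_poly_poly_mult:
  "map_poly (\<lambda>c. poly c x) (P * Q) = map_poly (\<lambda>c. poly c x) P * map_poly (\<lambda>c. poly c x) Q"
  by (rule poly_eqI) (simp add: coeff_map_poly coeff_mult poly_sum)

lemma eval2_add: "eval2 (P + Q) x y = eval2 P x y + eval2 Q x y"
  by (simp add: eval2_def map_poly_poly_add)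

lemma eval2_mult: "eval2 (P * Q) x y = eval2 P x y * eval2 Q x y"
  by (simp add: eval2_def map_poly_poly_mult)

lemma eval2_const: "eval2 [:[:c:]:] x y = c"
  by (simp add: eval2_def map_poly_pCons)

lemma eval2_X: "eval2 [:[:0, 1:]:] x y = x"
  by (simp add: eval2_def map_poly_pCons)

lemma eval2_Y: "eval2 [:0, 1:] x y = y"
  by (simp add: eval2_def map_poly_pCons)

lemma A2_involution_reflection:
  fixes c e :: complex
  assumes "e * e = 1"
  shows "A2_involution (\<lambda>(x, y). (c - x, e * y))" (is "A2_involution ?\<Phi>")
proof -
  have \<Phi>_poly: "?\<Phi> = poly_map2 [:[:c, -1:]:] [:0, [:e:]:]"
    by (simp add: poly_map2_def eval2_def map_poly_pCons fun_eq_iff)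
  have \<Phi>\<Phi>: "?\<Phi> (?\<Phi> v) = v" for v
    using assms by (cases v) (simp add: mult.assoc[symmetric])
  have "?\<Phi> \<noteq> id"
  proof
    assume "?\<Phi> = id"
    then have "?\<Phi> (c / 2 + 1, 0) = (c / 2 + 1, 0)"
      by simp
    then show False
      by simp
  qed
  with \<Phi>\<Phi> show ?thesis
    unfolding A2_involution_def A2_aut_def
    by (intro conjI exI[of _ "[:[:c, -1:]:]"] exI[of _ "[:0, [:e:]:]"]) (auto simp: \<Phi>_poly[symmetric] fun_eq_iff)
qed

lemma regular_on_const: "regular_on S (\<lambda>z. c)"
  unfolding regular_on_def by (rule exI[of _ "[:c:]"], rule exI[of _ 1]) simp

lemma regular_on_id: "regular_on S (\<lambda>z. z)"
  unfolding regular_on_def by (rule exI[of _ "[:0, 1:]"], rule exI[of _ 1]) simp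

lemma regular_on_cong: "regular_on S f \<Longrightarrow> (\<And>z. z \<in> S \<Longrightarrow> f z = g z) \<Longrightarrow> regular_on S g"
  unfolding regular_on_def by metis

lemma regular_on_add:
  assumes "regular_on S f" "regular_on S g"
  shows "regular_on S (\<lambda>z. f z + g z)"
proof -
  obtain p1 q1 p2 q2 where "\<forall>z\<in>S. poly q1 z \<noteq> 0 \<and> f z = poly p1 z / poly q1 z"
    and "\<forall>z\<in>S. poly q2 z \<noteq> 0 \<and> g z = poly p2 z / poly q2 z"
    using assms unfolding regular_on_def by blast
  then show ?thesis
    unfolding regular_on_def by (intro exI[of _ "p1 * q2 + p2 * q1"] exI[of _ "q1 * q2"]) (simp add: add_frac_eq)
qed

lemma regular_on_mult:
  assumes "regular_on S f" "regular_on S g"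
  shows "regular_on S (\<lambda>z. f z * g z)"
proof -
  obtain p1 q1 p2 q2 where "\<forall>z\<in>S. poly q1 z \<noteq> 0 \<and> f z = poly p1 z / poly q1 z"
    and "\<forall>z\<in>S. poly q2 z \<noteq> 0 \<and> g z = poly p2 z / poly q2 z"
    using assms unfolding regular_on_def by blast
  then show ?thesis
    unfolding regular_on_def by (intro exI[of _ "p1 * p2"] exI[of _ "q1 * q2"]) (simp add: times_divide_times_eq)
qed

lemma regular_on_inverse:
  assumes "regular_on S f" "\<And>z. z \<in> S \<Longrightarrow> f z \<noteq> 0"
  shows "regular_on S (\<lambda>z. 1 / f z)"
proof -
  obtain p q where "\<forall>z\<in>S. poly q z \<noteq> 0 \<and> f z = poly p z / poly q z"
    using assms(1) unfolding regular_on_def by blast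
  with assms(2) show ?thesis
    unfolding regular_on_def by (intro exI[of _ q] exI[of _ p]) auto
qed

lemma regular_on_diff:
  assumes "regular_on S f" "regular_on S g"
  shows "regular_on S (\<lambda>z. f z - g z)"
proof -
  have "regular_on S (\<lambda>z. f z + (-1) * g z)"
    by (intro regular_on_add regular_on_mult regular_on_const assms)
  then show ?thesis
    by (rule regular_on_cong) simp
qed

lemma regular_on_divide:
  assumes "regular_on S f" "regular_on S g" "\<And>z. z \<in> S \<Longrightarrow> g z \<noteq> 0"
  shows "regular_on S (\<lambda>z. f z / g z)"
proof -
  have "regular_on S (\<lambda>z. f z * (1 / g z))"
    by (intro regular_on_mult regular_on_inverse assms)
  then show ?thesis
    by (rule regular_on_cong) simp
qed

lemma regular_on_poly: "regular_on S f \<Longrightarrow> regular_on S (\<lambda>z. poly p (f z))"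
proof (induction p)
  case 0
  show ?case using regular_on_const[of S 0] by simp
next
  case (pCons a p)
  then have "regular_on S (\<lambda>z. a + f z * poly p (f z))"
    by (intro regular_on_add regular_on_mult regular_on_const) auto
  then show ?case by simp
qed

definition poly_in_coords :: "complex set \<Rightarrow> (complex \<Rightarrow> complex \<times> complex) \<Rightarrow> (complex \<Rightarrow> complex) \<Rightarrow> bool"
  where "poly_in_coords S \<tau> h \<longleftrightarrow> (\<exists>P. \<forall>z\<in>S. h z = eval2 P (fst (\<tau> z)) (snd (\<tau> z)))"

lemma poly_in_coords_const: "poly_in_coords S \<tau> (\<lambda>z. c)"
  unfolding poly_in_coords_def by (rule exI[of _ "[:[:c:]:]"]) (simp add: eval2_const)

lemma poly_in_coords_fst: "poly_in_coords S \<tau> (\<lambda>z. fst (\<tau> z))"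
  unfolding poly_in_coords_def by (rule exI[of _ "[:[:0, 1:]:]"]) (simp add: eval2_X)

lemma poly_in_coords_snd: "poly_in_coords S \<tau> (\<lambda>z. snd (\<tau> z))"
  unfolding poly_in_coords_def by (rule exI[of _ "[:0, 1:]"]) (simp add: eval2_Y)

lemma poly_in_coords_add:
  "poly_in_coords S \<tau> f \<Longrightarrow> poly_in_coords S \<tau> g \<Longrightarrow> poly_in_coords S \<tau> (\<lambda>z. f z + g z)"
  unfolding poly_in_coords_def by (metis eval2_add)

lemma poly_in_coords_mult:
  "poly_in_coords S \<tau> f \<Longrightarrow> poly_in_coords S \<tau> g \<Longrightarrow> poly_in_coords S \<tau> (\<lambda>z. f z * g z)"
  unfolding poly_in_coords_def by (metis eval2_mult)

lemma poly_in_coords_cong: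
  "poly_in_coords S \<tau> f \<Longrightarrow> (\<And>z. z \<in> S \<Longrightarrow> f z = g z) \<Longrightarrow> poly_in_coords S \<tau> g"
  unfolding poly_in_coords_def by metis

lemma poly_in_coords_diff:
  assumes "poly_in_coords S \<tau> f" "poly_in_coords S \<tau> g"
  shows "poly_in_coords S \<tau> (\<lambda>z. f z - g z)"
proof -
  have "poly_in_coords S \<tau> (\<lambda>z. f z + (-1) * g z)"
    by (intro poly_in_coords_add poly_in_coords_mult poly_in_coords_const assms)
  then show ?thesis
    by (rule poly_in_coords_cong) simp
qed

lemma poly_in_coords_poly: "poly_in_coords S \<tau> f \<Longrightarrow> poly_in_coords S \<tau> (\<lambda>z. poly p (f z))"
proof (induction p)
  case 0
  show ?case using poly_in_coords_const[of S \<tau> 0] by simp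
next
  case (pCons a p)
  then have "poly_in_coords S \<tau> (\<lambda>z. a + f z * poly p (f z))"
    by (intro poly_in_coords_add poly_in_coords_mult poly_in_coords_const) auto
  then show ?case by simp
qed

lemma poly_in_coords_prod:
  "finite A \<Longrightarrow> (\<And>a. a \<in> A \<Longrightarrow> poly_in_coords S \<tau> (g a)) \<Longrightarrow> poly_in_coords S \<tau> (\<lambda>z. \<Prod>a\<in>A. g a z)"
proof (induction A rule: finite_induct)
  case empty
  show ?case using poly_in_coords_const[of S \<tau> 1] by simp
next
  case (insert x A)
  then have "poly_in_coords S \<tau> (\<lambda>z. g x z * (\<Prod>a\<in>A. g a z))"
    by (intro poly_in_coords_mult) auto
  then show ?case using insert by simp
qed

lemma poly_in_coords_inverse_linear_factor:
  assumes t: "poly_in_coords S \<tau> t" and "finite T" "c \<in> T"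
    and inverse: "poly_in_coords S \<tau> (\<lambda>z. 1 / (\<Prod>d\<in>T. t z - d))"
    and avoids: "\<forall>z\<in>S. t z \<notin> T"
  shows "poly_in_coords S \<tau> (\<lambda>z. 1 / (t z - c))"
proof -
  have "poly_in_coords S \<tau> (\<lambda>z. (\<Prod>d\<in>T - {c}. t z - d) * (1 / (\<Prod>d\<in>T. t z - d)))"
    using \<open>finite T\<close> by (intro poly_in_coords_mult poly_in_coords_prod poly_in_coords_diff t inverse poly_in_coords_const) auto
  then show ?thesis
  proof (rule poly_in_coords_cong)
    fix z assume "z \<in> S"
    with avoids \<open>finite T\<close> have "(\<Prod>d\<in>T. t z - d) \<noteq> 0"
      by (auto simp: prod_zero_iff)
    moreover have "(\<Prod>d\<in>T. t z - d) = (t z - c) * (\<Prod>d\<in>T - {c}. t z - d)"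
      using \<open>finite T\<close> \<open>c \<in> T\<close> by (rule prod.remove)
    ultimately show "(\<Prod>d\<in>T - {c}. t z - d) * (1 / (\<Prod>d\<in>T. t z - d)) = 1 / (t z - c)"
      by simp
  qed
qed

lemma poly_in_coords_rational:
  assumes z: "poly_in_coords S \<tau> (\<lambda>z. z)"
    and inverse: "\<And>a. a \<notin> S \<Longrightarrow> poly_in_coords S \<tau> (\<lambda>z. 1 / (z - a))"
    and "S \<noteq> {}"
  shows "\<forall>z\<in>S. poly q z \<noteq> 0 \<Longrightarrow> poly_in_coords S \<tau> (\<lambda>z. poly p z / poly q z)"
proof (induction "degree q" arbitrary: q p rule: less_induct)
  case less
  show ?case
  proof (cases "degree q = 0")
    case True
    then obtain c where q: "q = [:c:]"
      by (metis degree_eq_zeroE)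
    with less.prems \<open>S \<noteq> {}\<close> have "c \<noteq> 0"
      by auto
    have "poly_in_coords S \<tau> (\<lambda>z. poly (smult (1 / c) p) z)"
      by (rule poly_in_coords_poly[OF z])
    then show ?thesis
      by (rule poly_in_coords_cong) (simp add: q)
  next
    case False
    then obtain r where "poly q r = 0"
      using fundamental_theorem_of_algebra constant_degree by metis
    with less.prems have "r \<notin> S"
      by auto
    obtain q1 where q1: "q = [:-r, 1:] * q1"
      using \<open>poly q r = 0\<close> by (metis poly_eq_0_iff_dvd dvdE)
    with False have "q1 \<noteq> 0"
      by auto
    then have "degree q = 1 + degree q1"
      unfolding q1 by (subst degree_mult_eq) auto
    then have "degree q1 < degree q"
      by simp
    moreover have "\<forall>z\<in>S. poly q1 z \<noteq> 0"
      using less.prems q1 by auto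
    ultimately have "poly_in_coords S \<tau> (\<lambda>z. 1 / (z - r) * (poly p z / poly q1 z))"
      by (intro poly_in_coords_mult inverse \<open>r \<notin> S\<close> less.hyps)
    then show ?thesis
      by (rule poly_in_coords_cong) (simp add: q1 algebra_simps)
  qed
qed

lemma infinite_obtain_two:
  assumes "infinite S"
  obtains x y where "x \<in> S" "y \<in> S" "x \<noteq> y"
proof -
  obtain x where "x \<in> S"
    using assms by (metis finite.emptyI equals0I)
  moreover obtain y where "y \<in> S - {x}"
    using assms by (metis finite.emptyI equals0I finite_Diff2 finite_insert)
  ultimately show ?thesis
    using that by blast
qed

lemma infinite_curve: "finite F \<Longrightarrow> infinite (curve F)"
  unfolding curve_def using Diff_infinite_finite[OF _ infinite_UNIV_char_0] by blast

lemma closed_embedding_A2I: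
  assumes "finite F"
    and "regular_on (curve F) (fst \<circ> \<tau>)" "regular_on (curve F) (snd \<circ> \<tau>)"
    and z: "poly_in_coords (curve F) \<tau> (\<lambda>z. z)"
    and inverse: "\<And>a. a \<in> F \<Longrightarrow> poly_in_coords (curve F) \<tau> (\<lambda>z. 1 / (z - a))"
  shows "closed_embedding_A2 (curve F) \<tau>"
proof -
  have "curve F \<noteq> {}"
    using infinite_curve[OF \<open>finite F\<close>] by auto
  have "poly_in_coords (curve F) \<tau> h" if h: "regular_on (curve F) h" for h
  proof -
    obtain p q where pq: "\<forall>z\<in>curve F. poly q z \<noteq> 0 \<and> h z = poly p z / poly q z"
      using h unfolding regular_on_def by blast
    have "poly_in_coords (curve F) \<tau> (\<lambda>z. poly p z / poly q z)"
      using inverse pq by (intro poly_in_coords_rational[OF z _ \<open>curve F \<noteq> {}\<close>]) (auto simp: curve_def)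
    then show ?thesis
      by (rule poly_in_coords_cong) (use pq in auto)
  qed
  with assms(2,3) show ?thesis
    unfolding closed_embedding_A2_def poly_in_coords_def by blast
qed

section \<open>Automorphisms of the curve are Moebius transformations\<close>

lemma coprime_wronskian_eq_0_imp_constant:
  fixes p q :: "complex poly"
  assumes "coprime p q" "q \<noteq> 0" and wronskian: "pderiv p * q = p * pderiv q"
  shows "degree p = 0 \<and> degree q = 0"
proof -
  have "q dvd p * pderiv q"
    unfolding wronskian[symmetric] by simp
  moreover have "coprime q p"
    using assms(1) by (simp add: coprime_commute)
  ultimately have "q dvd pderiv q"
    using coprime_dvd_mult_right_iff[of q p "pderiv q"] by blast
  have "pderiv q = 0"
  proof (rule ccontr)
    assume "pderiv q \<noteq> 0"
    then have "degree q \<le> degree (pderiv q)" "degree q \<noteq> 0"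
      using \<open>q dvd pderiv q\<close> dvd_imp_degree_le pderiv_eq_0_iff by blast+
    then show False
      by (simp add: degree_pderiv)
  qed
  with wronskian \<open>q \<noteq> 0\<close> have "pderiv p = 0"
    by simp
  with \<open>pderiv q = 0\<close> show ?thesis
    by (simp add: pderiv_eq_0_iff)
qed

lemma degree_le_1_if_rsquarefree_at_most_one_root:
  fixes f :: "complex poly"
  assumes "rsquarefree f" and "\<And>x y. poly f x = 0 \<Longrightarrow> poly f y = 0 \<Longrightarrow> x = y"
  shows "degree f \<le> 1"
proof -
  define A where "A = {x. poly f x = 0}"
  have "finite A"
    using assms(1) unfolding A_def rsquarefree_def by (simp add: poly_roots_finite)
  with assms(2) have "card A \<le> 1"
    unfolding A_def by (simp add: card_le_Suc0_iff_eq)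
  have "degree f \<le> degree (\<Prod>z\<in>A. [:-z, 1:])"
    using complex_poly_decompose_rsquarefree[OF assms(1)] unfolding A_def by (metis degree_smult_le)
  also have "\<dots> \<le> card A"
    using degree_prod_sum_le[OF \<open>finite A\<close>, of "\<lambda>z. [:-z, 1:]"] by simp
  finally show ?thesis
    using \<open>card A \<le> 1\<close> by simp
qed

lemma degree_le_1_if_cofinite_pencil:
  fixes p q :: "'a::field_char_0 poly"
  assumes "finite B" and pencil: "\<And>c. c \<notin> B \<Longrightarrow> degree (p - smult c q) \<le> 1"
  shows "degree p \<le> 1 \<and> degree q \<le> 1"
proof -
  obtain c1 where c1: "c1 \<notin> B"
    using ex_new_if_finite[OF infinite_UNIV_char_0 assms(1)] by auto
  obtain c2 where c2: "c2 \<notin> insert c1 B"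
    using ex_new_if_finite[OF infinite_UNIV_char_0] assms(1) by (metis finite_insert)
  have "coeff p n = 0 \<and> coeff q n = 0" if "n > 1" for n
  proof -
    have "coeff (p - smult c q) n = 0" if "c \<notin> B" for c
      using pencil[OF that] \<open>n > 1\<close> by (intro coeff_eq_0) linarith
    then have "coeff p n = c1 * coeff q n" "coeff p n = c2 * coeff q n"
      using c1 c2 by (metis coeff_diff coeff_smult eq_iff_diff_eq_0 insertCI)+
    then have "(c1 - c2) * coeff q n = 0"
      by (metis diff_self left_diff_distrib)
    with c2 \<open>coeff p n = c1 * coeff q n\<close> show ?thesis
      by auto
  qed
  then show ?thesis
    by (auto intro!: degree_le)
qed

lemma inj_on_rational_fibre_degree_le_1:
  fixes p q :: "complex poly"
  defines "\<sigma> \<equiv> \<lambda>z. poly p z / poly q z"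
  assumes "coprime p q" and inj: "inj_on \<sigma> (curve F)"
    and c: "c \<notin> \<sigma> ` (F \<union> {x. poly (pderiv p * q - p * pderiv q) x = 0})"
  shows "degree (p - smult c q) \<le> 1"
proof (rule degree_le_1_if_rsquarefree_at_most_one_root)
  define f where "f = p - smult c q"
  have root: "z \<in> curve F \<and> \<sigma> z = c" if "poly f z = 0" for z
  proof -
    have "poly p z = c * poly q z"
      using that unfolding f_def by simp
    with coprime_poly_0[OF \<open>coprime p q\<close>, of z] have "\<sigma> z = c"
      unfolding \<sigma>_def by auto
    with c show ?thesis
      unfolding curve_def by auto
  qed
  have "pderiv p * q - p * pderiv q = pderiv f * q - f * pderiv q"
    unfolding f_def by (simp add: pderiv_diff pderiv_smult algebra_simps)
  then have "poly (pderiv p * q - p * pderiv q) z = 0" if "poly f z = 0" "poly (pderiv f) z = 0" for z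
    using that by simp
  with root c show "rsquarefree (p - smult c q)"
    unfolding rsquarefree_roots f_def[symmetric] by (metis (mono_tags) UnCI image_eqI mem_Collect_eq)
  show "x = y" if "poly (p - smult c q) x = 0" "poly (p - smult c q) y = 0" for x y
    using root[of x] root[of y] that inj unfolding f_def by (metis inj_onD)
qed

lemma inj_on_rational_imp_degree_le_1:
  fixes p q :: "complex poly"
  assumes "finite F" "coprime p q" and q: "\<forall>z\<in>curve F. poly q z \<noteq> 0"
    and inj: "inj_on (\<lambda>z. poly p z / poly q z) (curve F)"
  shows "degree p \<le> 1 \<and> degree q \<le> 1"
proof (rule degree_le_1_if_cofinite_pencil)
  define W where "W = pderiv p * q - p * pderiv q"
  obtain z1 z2 where z12: "z1 \<in> curve F" "z2 \<in> curve F" "z1 \<noteq> z2"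
    using infinite_obtain_two[OF infinite_curve[OF \<open>finite F\<close>]] by blast
  with q have "q \<noteq> 0"
    by auto
  have "W \<noteq> 0"
  proof
    assume "W = 0"
    then have "degree p = 0 \<and> degree q = 0"
      using coprime_wronskian_eq_0_imp_constant[OF assms(2) \<open>q \<noteq> 0\<close>] unfolding W_def by simp
    then have "poly p z1 / poly q z1 = poly p z2 / poly q z2"
      by (metis degree_eq_zeroE poly_const_conv)
    with z12 inj show False
      by (auto dest: inj_onD)
  qed
  show "finite ((\<lambda>z. poly p z / poly q z) ` (F \<union> {x. poly W x = 0}))"
    using \<open>finite F\<close> poly_roots_finite[OF \<open>W \<noteq> 0\<close>] by simp
  show "degree (p - smult c q) \<le> 1" if "c \<notin> (\<lambda>z. poly p z / poly q z) ` (F \<union> {x. poly W x = 0})" for c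
    using inj_on_rational_fibre_degree_le_1[OF \<open>coprime p q\<close> inj] that unfolding W_def by blast
qed

lemma poly_degree_le_1:
  assumes "degree p \<le> 1"
  shows "poly p z = coeff p 0 + coeff p 1 * z"
proof -
  have "p = [:coeff p 0, coeff p 1:]"
  proof (rule poly_eqI)
    fix n
    show "coeff p n = coeff [:coeff p 0, coeff p 1:] n"
      using assms by (cases n; cases "n - 1") (auto intro!: coeff_eq_0)
  qed
  then show ?thesis
    by (metis add.right_neutral mult.commute mult_zero_left poly_0 poly_pCons)
qed

lemma regular_inj_on_curve_is_Moebius:
  assumes "finite F" "regular_on (curve F) f" "inj_on f (curve F)"
  obtains \<alpha> \<beta> \<gamma> \<delta> where "\<forall>z\<in>curve F. \<delta> + \<gamma> * z \<noteq> 0 \<and> f z = (\<beta> + \<alpha> * z) / (\<delta> + \<gamma> * z)"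
proof -
  obtain p0 q0 where pq0: "\<forall>z\<in>curve F. poly q0 z \<noteq> 0 \<and> f z = poly p0 z / poly q0 z"
    using assms(2) unfolding regular_on_def by blast
  have "q0 \<noteq> 0"
    using pq0 infinite_curve[OF assms(1)] by (metis finite.emptyI equals0I poly_0)
  define g where "g = gcd p0 q0"
  define p where "p = p0 div g"
  define q where "q = q0 div g"
  have "coprime p q"
    unfolding p_def q_def g_def using \<open>q0 \<noteq> 0\<close> by (intro div_gcd_coprime) simp
  have "p0 = p * g" "q0 = q * g"
    unfolding p_def q_def g_def by simp_all
  with pq0 have pq: "\<forall>z\<in>curve F. poly q z \<noteq> 0 \<and> f z = poly p z / poly q z"
    by auto
  then have "inj_on (\<lambda>z. poly p z / poly q z) (curve F)"
    using assms(3) inj_on_cong by fastforce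
  with assms(1) \<open>coprime p q\<close> pq have "degree p \<le> 1" "degree q \<le> 1"
    using inj_on_rational_imp_degree_le_1 by blast+
  with pq show ?thesis
    by (intro that[of "coeff q 0" "coeff q 1" "coeff p 0" "coeff p 1"]) (simp add: poly_degree_le_1)
qed

lemma affine_involution_is_point_reflection:
  fixes a c :: complex
  assumes "z1 \<in> S" "z2 \<in> S" "z1 \<noteq> z2"
    and \<sigma>: "\<forall>z\<in>S. \<sigma> z = c + a * z" and maps: "\<sigma> ` S \<subseteq> S"
    and invol: "\<forall>z\<in>S. \<sigma> (\<sigma> z) = z" and nonid: "\<exists>z\<in>S. \<sigma> z \<noteq> z"
  shows "\<forall>z\<in>S. \<sigma> z = c - z"
proof -
  have twice: "(a * a - 1) * z + (1 + a) * c = 0" if "z \<in> S" for z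
  proof -
    have "z = c + a * (c + a * z)"
      using invol \<sigma> maps that by (metis image_subset_iff)
    then show ?thesis
      by (simp add: algebra_simps)
  qed
  have "(a * a - 1) * (z1 - z2) = ((a * a - 1) * z1 + (1 + a) * c) - ((a * a - 1) * z2 + (1 + a) * c)"
    by (simp add: algebra_simps)
  also have "\<dots> = 0"
    using twice[OF assms(1)] twice[OF assms(2)] by simp
  finally have "(a * a - 1) * (z1 - z2) = 0" .
  with assms(3) have "a\<^sup>2 = 1"
    by (simp add: power2_eq_square)
  moreover have "a \<noteq> 1"
  proof
    assume "a = 1"
    with twice[OF assms(1)] have "c = 0"
      by simp
    with \<sigma> nonid \<open>a = 1\<close> show False
      by simp
  qed
  ultimately have "a = -1"
    by (simp add: power2_eq_1_iff)
  with \<sigma> show ?thesis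
    by simp
qed

lemma Moebius_involution_trace_eq_0:
  fixes \<alpha> \<beta> \<gamma> \<delta> :: complex
  assumes "infinite S" "\<gamma> \<noteq> 0"
    and \<sigma>: "\<forall>z\<in>S. \<delta> + \<gamma> * z \<noteq> 0 \<and> \<sigma> z = (\<beta> + \<alpha> * z) / (\<delta> + \<gamma> * z)"
    and maps: "\<sigma> ` S \<subseteq> S" and invol: "\<forall>z\<in>S. \<sigma> (\<sigma> z) = z"
  shows "\<alpha> + \<delta> = 0"
proof (rule ccontr)
  assume "\<alpha> + \<delta> \<noteq> 0"
  have "S \<subseteq> {z. poly [:\<beta>, \<alpha> - \<delta>, -\<gamma>:] z = 0}"
  proof
    fix z assume "z \<in> S"
    define u where "u = \<sigma> z"
    have "u \<in> S" "\<sigma> u = z"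
      using maps invol \<open>z \<in> S\<close> unfolding u_def by auto
    then have "u * (\<delta> + \<gamma> * z) = \<beta> + \<alpha> * z" "\<beta> + \<alpha> * u = z * (\<delta> + \<gamma> * u)"
      using \<sigma> \<open>z \<in> S\<close> unfolding u_def by (auto simp: divide_eq_eq)
    then have "(\<alpha> + \<delta>) * (\<beta> + (\<alpha> - \<delta>) * z - \<gamma> * z * z) = 0"
      by algebra
    with \<open>\<alpha> + \<delta> \<noteq> 0\<close> have "\<beta> + (\<alpha> - \<delta>) * z - \<gamma> * z * z = 0"
      by simp
    moreover have "poly [:\<beta>, \<alpha> - \<delta>, -\<gamma>:] z = \<beta> + (\<alpha> - \<delta>) * z - \<gamma> * z * z"
      by (simp add: algebra_simps)
    ultimately show "z \<in> {z. poly [:\<beta>, \<alpha> - \<delta>, -\<gamma>:] z = 0}"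
      by (simp only: mem_Collect_eq)
  qed
  moreover have "[:\<beta>, \<alpha> - \<delta>, -\<gamma>:] \<noteq> 0"
    using \<open>\<gamma> \<noteq> 0\<close> by simp
  ultimately show False
    using poly_roots_finite \<open>infinite S\<close> finite_subset by blast
qed

lemma Moebius_involution_is_inversion:
  fixes \<alpha> \<beta> \<gamma> \<delta> :: complex
  assumes "infinite S" "\<gamma> \<noteq> 0"
    and \<sigma>: "\<forall>z\<in>S. \<delta> + \<gamma> * z \<noteq> 0 \<and> \<sigma> z = (\<beta> + \<alpha> * z) / (\<delta> + \<gamma> * z)"
    and maps: "\<sigma> ` S \<subseteq> S" and invol: "\<forall>z\<in>S. \<sigma> (\<sigma> z) = z" and inj: "inj_on \<sigma> S"
  obtains b k where "b \<notin> S" "k \<noteq> 0" "\<forall>z\<in>S. \<sigma> z = b + k / (z - b)"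
proof -
  have \<delta>: "\<delta> = - \<alpha>"
    using Moebius_involution_trace_eq_0[OF assms(1-5)] by (simp add: add_eq_0_iff2)
  define b where "b = \<alpha> / \<gamma>"
  define k where "k = (\<beta> * \<gamma> + \<alpha> * \<alpha>) / (\<gamma> * \<gamma>)"
  have "b \<notin> S"
    using \<sigma> \<open>\<gamma> \<noteq> 0\<close> unfolding b_def \<delta> by auto
  have inversion: "\<forall>z\<in>S. \<sigma> z = b + k / (z - b)"
  proof
    fix z assume "z \<in> S"
    with \<sigma> have "- \<alpha> + \<gamma> * z \<noteq> 0" "\<sigma> z = (\<beta> + \<alpha> * z) / (- \<alpha> + \<gamma> * z)"
      unfolding \<delta> by simp_all
    moreover have "z - \<alpha> / \<gamma> = (- \<alpha> + \<gamma> * z) / \<gamma>"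
      using \<open>\<gamma> \<noteq> 0\<close> by (simp add: field_simps)
    ultimately show "\<sigma> z = b + k / (z - b)"
      unfolding b_def k_def using \<open>\<gamma> \<noteq> 0\<close> by (simp add: field_simps)
  qed
  have "k \<noteq> 0"
  proof
    assume "k = 0"
    then have "\<forall>z\<in>S. \<sigma> z = b"
      using inversion by simp
    moreover obtain z1 z2 where "z1 \<in> S" "z2 \<in> S" "z1 \<noteq> z2"
      using infinite_obtain_two[OF \<open>infinite S\<close>] by blast
    ultimately show False
      using inj by (metis inj_onD)
  qed
  with \<open>b \<notin> S\<close> inversion show ?thesis
    using that by blast
qed

lemma curve_involution_cases:
  assumes "finite F" and "curve_involution (curve F) \<sigma>"
  obtains (point_reflection) c where "\<forall>z\<in>curve F. \<sigma> z = c - z"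
    | (inversion) b k where "b \<in> F" "k \<noteq> 0" "\<forall>z\<in>curve F. \<sigma> z = b + k / (z - b)"
proof -
  have maps: "\<sigma> ` curve F \<subseteq> curve F" and "regular_on (curve F) \<sigma>"
    and invol: "\<forall>z\<in>curve F. \<sigma> (\<sigma> z) = z" and nonid: "\<exists>z\<in>curve F. \<sigma> z \<noteq> z"
    using assms(2) unfolding curve_involution_def curve_aut_def curve_morphism_def by blast+
  have inj: "inj_on \<sigma> (curve F)"
  proof (rule inj_onI)
    fix x y assume "x \<in> curve F" "y \<in> curve F" "\<sigma> x = \<sigma> y"
    with invol show "x = y"
      by metis
  qed
  obtain \<alpha> \<beta> \<gamma> \<delta> where \<sigma>: "\<forall>z\<in>curve F. \<delta> + \<gamma> * z \<noteq> 0 \<and> \<sigma> z = (\<beta> + \<alpha> * z) / (\<delta> + \<gamma> * z)"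
    by (rule regular_inj_on_curve_is_Moebius[OF assms(1) \<open>regular_on (curve F) \<sigma>\<close> inj])
  obtain z1 z2 where z12: "z1 \<in> curve F" "z2 \<in> curve F" "z1 \<noteq> z2"
    using infinite_obtain_two[OF infinite_curve[OF assms(1)]] by blast
  show ?thesis
  proof (cases "\<gamma> = 0")
    case True
    with \<sigma> z12(1) have "\<delta> \<noteq> 0"
      by auto
    with \<sigma> True have "\<forall>z\<in>curve F. \<sigma> z = \<beta> / \<delta> + \<alpha> / \<delta> * z"
      by (simp add: add_divide_distrib)
    then have "\<forall>z\<in>curve F. \<sigma> z = \<beta> / \<delta> - z"
      by (rule affine_involution_is_point_reflection[OF z12 _ maps invol nonid])
    then show ?thesis
      by (rule point_reflection)
  next
    case False
    obtain b k where "b \<notin> curve F" "k \<noteq> 0" "\<forall>z\<in>curve F. \<sigma> z = b + k / (z - b)"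
      using Moebius_involution_is_inversion[OF infinite_curve[OF assms(1)] False \<sigma> maps invol inj] .
    then show ?thesis
      using inversion unfolding curve_def by blast
  qed
qed

section \<open>Point reflections\<close>

lemma point_reflection_preserves_boundary:
  assumes maps: "\<sigma> ` curve F \<subseteq> curve F" and \<sigma>: "\<forall>z\<in>curve F. \<sigma> z = c - z"
  shows "(\<lambda>a. c - a) ` F = F"
proof -
  have "c - a \<in> F" if "a \<in> F" for a
    using maps \<sigma> that unfolding curve_def by force
  then show ?thesis
    by force
qed

lemma prod_diff_point_reflection:
  fixes F :: "complex set"
  assumes "(\<lambda>a. c - a) ` F = F"
  shows "(\<Prod>a\<in>F. (c - z) - a) = (-1) ^ card F * (\<Prod>a\<in>F. z - a)"
proof -
  have "(\<Prod>a\<in>F. (c - z) - a) = (\<Prod>a\<in>F. (-1) * (z - (c - a)))"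
    by (rule prod.cong) simp_all
  also have "\<dots> = (\<Prod>a\<in>F. -1) * (\<Prod>a\<in>F. z - (c - a))"
    by (rule prod.distrib)
  also have "(\<Prod>a\<in>F. z - (c - a)) = (\<Prod>a\<in>F. z - a)"
    by (subst (2) assms[symmetric], subst prod.reindex) (auto simp: inj_on_def)
  finally show ?thesis
    by simp
qed

lemma point_reflection_equivariant_embedding:
  assumes "finite F" and maps: "\<sigma> ` curve F \<subseteq> curve F" and \<sigma>: "\<forall>z\<in>curve F. \<sigma> z = c - z"
  shows "\<exists>\<tau> \<Phi>. closed_embedding_A2 (curve F) \<tau> \<and> A2_involution \<Phi> \<and>
           (\<forall>z\<in>curve F. \<Phi> (\<tau> z) = \<tau> (\<sigma> z))"
proof -
  define Q where "Q = (\<lambda>z. \<Prod>a\<in>F. z - a)"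
  define e where "e = (-1 :: complex) ^ card F"
  have "e * e = 1"
    unfolding e_def by (simp flip: power_add power_mult_distrib)
  have Q_nonzero: "Q z \<noteq> 0" if "z \<in> curve F" for z
    using that \<open>finite F\<close> unfolding Q_def curve_def by (simp add: prod_zero_iff)
  define \<tau> where "\<tau> = (\<lambda>z. (z, 1 / Q z))"
  have "(\<lambda>(x, y). (c - x, e * y)) (\<tau> z) = \<tau> (\<sigma> z)" if "z \<in> curve F" for z
  proof -
    have "Q (\<sigma> z) = e * Q z"
      using \<sigma> that prod_diff_point_reflection[OF point_reflection_preserves_boundary[OF maps \<sigma>]]
      unfolding Q_def e_def by simp
    moreover have "e / Q z = 1 / (e * Q z)"
      using \<open>e * e = 1\<close> Q_nonzero[OF that] by (simp add: divide_simps mult.assoc[symmetric])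
    ultimately show ?thesis
      using \<sigma> that unfolding \<tau>_def by simp
  qed
  moreover have "closed_embedding_A2 (curve F) \<tau>"
  proof (rule closed_embedding_A2I[OF \<open>finite F\<close>])
    have "regular_on (curve F) (\<lambda>z. 1 / poly (\<Prod>a\<in>F. [:-a, 1:]) z)"
      using Q_nonzero by (intro regular_on_inverse regular_on_poly regular_on_id) (simp add: poly_prod Q_def)
    then show "regular_on (curve F) (snd \<circ> \<tau>)"
      unfolding \<tau>_def Q_def by (simp add: poly_prod o_def)
    show "regular_on (curve F) (fst \<circ> \<tau>)"
      unfolding \<tau>_def o_def using regular_on_id by simp
    show z: "poly_in_coords (curve F) \<tau> (\<lambda>z. z)"
      using poly_in_coords_fst[of "curve F" \<tau>] unfolding \<tau>_def by simp
    have "poly_in_coords (curve F) \<tau> (\<lambda>z. 1 / (\<Prod>a\<in>F. z - a))"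
      using poly_in_coords_snd[of "curve F" \<tau>] unfolding \<tau>_def Q_def by simp
    then show "poly_in_coords (curve F) \<tau> (\<lambda>z. 1 / (z - a))" if "a \<in> F" for a
      using poly_in_coords_inverse_linear_factor[OF z \<open>finite F\<close> that] unfolding curve_def by blast
  qed
  ultimately show ?thesis
    using A2_involution_reflection[OF \<open>e * e = 1\<close>] by blast
qed

section \<open>Inversions\<close>

lemma joukowski_eq_imp:
  fixes w a k :: complex
  assumes "w \<noteq> 0" "a \<noteq> 0" "w + k / w = a + k / a"
  shows "w = a \<or> w = k / a"
proof -
  have "(w - a) * (w - k / a) = w * ((w + k / w) - (a + k / a))"
    using assms(1,2) by (simp add: field_simps)
  with assms(3) show ?thesis
    by simp
qed

lemma inverse_diff_via_joukowski:
  fixes w a k :: complex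
  assumes "w \<noteq> 0" "a \<noteq> 0" "w \<noteq> a" "w \<noteq> k / a"
  shows "1 / (w - a) = (w - k / a) * (1 / w) * (1 / ((w + k / w) - (a + k / a)))"
proof -
  have factor: "w * ((w + k / w) - (a + k / a)) = (w - a) * (w - k / a)"
    using assms(1,2) by (simp add: field_simps)
  have "(w - k / a) * (1 / w) * (1 / ((w + k / w) - (a + k / a))) = (w - k / a) / (w * ((w + k / w) - (a + k / a)))"
    by simp
  also have "\<dots> = 1 / (w - a)"
    unfolding factor using assms(3,4) by simp
  finally show ?thesis ..
qed

lemma coprime_if_no_common_root:
  fixes p q :: "complex poly"
  assumes "p \<noteq> 0" and no_common_root: "\<And>x. poly p x = 0 \<Longrightarrow> poly q x \<noteq> 0"
  shows "coprime p q"
proof (rule coprimeI)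
  fix d assume "d dvd p" "d dvd q"
  show "is_unit d"
  proof (rule ccontr)
    assume "\<not> is_unit d"
    with \<open>d dvd p\<close> \<open>p \<noteq> 0\<close> have "\<not> constant (poly d)"
      by (auto simp: constant_degree is_unit_iff_degree)
    then obtain x where "poly d x = 0"
      using fundamental_theorem_of_algebra by blast
    with \<open>d dvd p\<close> \<open>d dvd q\<close> no_common_root show False
      by (metis dvdE mult_eq_0_iff poly_mult)
  qed
qed

lemma square_minus_const_split:
  fixes d :: complex and T :: "complex set"
  assumes "finite T" "d \<noteq> 0"
  obtains E1 E2 :: "complex poly"
  where "\<And>x. poly E1 x * poly E2 x = x\<^sup>2 - d" and "\<And>x. poly E1 x = 0 \<Longrightarrow> x \<in> T"
    and "coprime E2 (\<Prod>c\<in>T. [:-c, 1:])"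
proof -
  define C where "C = {csqrt d, - csqrt d}"
  define E1 where "E1 = (\<Prod>c\<in>C \<inter> T. [:-c, 1:])"
  define E2 where "E2 = (\<Prod>c\<in>C - T. [:-c, 1:])"
  have "poly E1 x * poly E2 x = x\<^sup>2 - d" for x
  proof -
    have "poly E1 x * poly E2 x = (\<Prod>c\<in>C. x - c)"
      unfolding E1_def E2_def poly_prod by (subst prod.Int_Diff[of C _ T]) (simp_all add: C_def)
    also have "\<dots> = x\<^sup>2 - d"
      using \<open>d \<noteq> 0\<close> power2_csqrt[of d] unfolding C_def by (simp add: algebra_simps power2_eq_square)
    finally show ?thesis .
  qed
  moreover have "x \<in> T" if "poly E1 x = 0" for x
    using that unfolding E1_def C_def by (auto simp: poly_prod prod_zero_iff)
  moreover have "coprime E2 (\<Prod>c\<in>T. [:-c, 1:])"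
    using \<open>finite T\<close> unfolding E2_def C_def by (intro coprime_if_no_common_root) (auto simp: poly_prod prod_zero_iff)
  ultimately show ?thesis
    using that by blast
qed

lemma poly_in_coords_inverse_of_coprime:
  fixes p q :: "complex poly"
  assumes t: "poly_in_coords S \<tau> t"
    and ratio: "poly_in_coords S \<tau> (\<lambda>z. poly p (t z) / poly q (t z))"
    and "coprime p q" and q: "\<forall>z\<in>S. poly q (t z) \<noteq> 0"
  shows "poly_in_coords S \<tau> (\<lambda>z. 1 / poly q (t z))"
proof -
  obtain u v where uv: "u * p + v * q = 1"
    using bezout_coefficients_fst_snd[of p q] \<open>coprime p q\<close> by (metis coprime_iff_gcd_eq_1)
  have "poly_in_coords S \<tau> (\<lambda>z. poly u (t z) * (poly p (t z) / poly q (t z)) + poly v (t z))"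
    by (intro poly_in_coords_add poly_in_coords_mult poly_in_coords_poly t ratio)
  then show ?thesis
  proof (rule poly_in_coords_cong)
    fix z assume "z \<in> S"
    have "poly u (t z) * poly p (t z) + poly v (t z) * poly q (t z) = 1"
      using arg_cong[OF uv, of "\<lambda>r. poly r (t z)"] by simp
    with q \<open>z \<in> S\<close> show "poly u (t z) * (poly p (t z) / poly q (t z)) + poly v (t z) = 1 / poly q (t z)"
      by (simp add: field_simps)
  qed
qed

lemma poly_in_coords_quadratic_cover:
  fixes R E1 E2 :: "complex poly"
  assumes \<tau>: "\<forall>z\<in>S. \<tau> z = (s z / (poly R (t z) * poly E1 (t z)), t z)"
    and square: "\<forall>z\<in>S. s z * s z = poly E1 (t z) * poly E2 (t z)"
    and "coprime E2 R" and R: "\<forall>z\<in>S. poly R (t z) \<noteq> 0" and E1: "\<forall>z\<in>S. poly E1 (t z) \<noteq> 0"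
  shows "poly_in_coords S \<tau> s" and "poly_in_coords S \<tau> (\<lambda>z. 1 / poly R (t z))"
proof -
  have t: "poly_in_coords S \<tau> t"
    using poly_in_coords_snd by (rule poly_in_coords_cong) (simp add: \<tau>)
  have x: "poly_in_coords S \<tau> (\<lambda>z. s z / (poly R (t z) * poly E1 (t z)))"
    using poly_in_coords_fst by (rule poly_in_coords_cong) (simp add: \<tau>)
  have "poly_in_coords S \<tau> (\<lambda>z. s z / (poly R (t z) * poly E1 (t z)) * (poly R (t z) * poly E1 (t z)))"
    by (intro poly_in_coords_mult x poly_in_coords_poly t)
  then show s: "poly_in_coords S \<tau> s"
    by (rule poly_in_coords_cong) (use R E1 in simp)
  have "poly_in_coords S \<tau> (\<lambda>z. s z / (poly R (t z) * poly E1 (t z)) * s z)"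
    by (intro poly_in_coords_mult x s)
  then have "poly_in_coords S \<tau> (\<lambda>z. poly E2 (t z) / poly R (t z))"
  proof (rule poly_in_coords_cong)
    fix z assume "z \<in> S"
    with square R E1 show "s z / (poly R (t z) * poly E1 (t z)) * s z = poly E2 (t z) / poly R (t z)"
      by (simp add: field_simps)
  qed
  then show "poly_in_coords S \<tau> (\<lambda>z. 1 / poly R (t z))"
    by (rule poly_in_coords_inverse_of_coprime[OF t _ \<open>coprime E2 R\<close> R])
qed

definition joukowski :: "complex \<Rightarrow> complex \<Rightarrow> complex \<Rightarrow> complex"
  where "joukowski b k z = (z - b) + k / (z - b)"

lemma joukowski_inversion:
  assumes "k \<noteq> 0" "z \<noteq> b"
  shows "joukowski b k (b + k / (z - b)) = joukowski b k z"
    and "joukowski b (- k) (b + k / (z - b)) = - joukowski b (- k) z"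
  using assms unfolding joukowski_def by simp_all

lemma joukowski_square:
  assumes "z \<noteq> b"
  shows "joukowski b (- k) z * joukowski b (- k) z = (joukowski b k z)\<^sup>2 - 4 * k"
proof -
  have "(w + - k / w) * (w + - k / w) = (w + k / w)\<^sup>2 - 4 * k" if "w \<noteq> 0" for w :: complex
    using that by (simp add: field_simps power2_eq_square)
  from this[of "z - b"] assms show ?thesis
    unfolding joukowski_def by simp
qed

lemma regular_on_joukowski: "b \<notin> S \<Longrightarrow> regular_on S (joukowski b k)"
  unfolding joukowski_def
  by (intro regular_on_add regular_on_divide regular_on_diff regular_on_id regular_on_const) auto

lemma poly_in_coords_from_joukowski_pair:
  assumes "k \<noteq> 0"
    and t: "poly_in_coords S \<tau> (joukowski b k)" and s: "poly_in_coords S \<tau> (joukowski b (- k))"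
  shows "poly_in_coords S \<tau> (\<lambda>z. z)" and "poly_in_coords S \<tau> (\<lambda>z. 1 / (z - b))"
proof -
  have "poly_in_coords S \<tau> (\<lambda>z. b + (joukowski b k z + joukowski b (- k) z) * (1 / 2))"
    by (intro poly_in_coords_add poly_in_coords_mult t s poly_in_coords_const)
  then show "poly_in_coords S \<tau> (\<lambda>z. z)"
    by (rule poly_in_coords_cong) (simp add: joukowski_def)
  have "poly_in_coords S \<tau> (\<lambda>z. (joukowski b k z - joukowski b (- k) z) * (1 / (2 * k)))"
    by (intro poly_in_coords_mult poly_in_coords_diff t s poly_in_coords_const)
  then show "poly_in_coords S \<tau> (\<lambda>z. 1 / (z - b))"
    by (rule poly_in_coords_cong) (use \<open>k \<noteq> 0\<close> in \<open>simp add: joukowski_def\<close>)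
qed

lemma inversion_preserves_boundary:
  assumes "k \<noteq> 0" and maps: "\<sigma> ` curve F \<subseteq> curve F"
    and \<sigma>: "\<forall>z\<in>curve F. \<sigma> z = b + k / (z - b)"
    and "a \<in> F" "a \<noteq> b"
  shows "b + k / (a - b) \<in> F"
proof (rule ccontr)
  assume "b + k / (a - b) \<notin> F"
  then have inside: "b + k / (a - b) \<in> curve F"
    unfolding curve_def by simp
  with \<sigma> \<open>k \<noteq> 0\<close> \<open>a \<noteq> b\<close> have "\<sigma> (b + k / (a - b)) = a"
    by simp
  with maps inside \<open>a \<in> F\<close> show False
    unfolding curve_def by force
qed

lemma joukowski_notin_boundary_image:
  assumes "k \<noteq> 0" "b \<in> F" "z \<in> curve F"
    and inversion_F: "\<And>a. a \<in> F \<Longrightarrow> a \<noteq> b \<Longrightarrow> b + k / (a - b) \<in> F"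
  shows "joukowski b k z \<notin> joukowski b k ` (F - {b})"
proof
  assume "joukowski b k z \<in> joukowski b k ` (F - {b})"
  then obtain a where a: "a \<in> F" "a \<noteq> b" "(z - b) + k / (z - b) = (a - b) + k / (a - b)"
    unfolding joukowski_def by blast
  have "z \<notin> F"
    using \<open>z \<in> curve F\<close> unfolding curve_def by simp
  with \<open>b \<in> F\<close> have "z - b \<noteq> 0"
    by auto
  with a have "z - b = a - b \<or> z - b = k / (a - b)"
    by (intro joukowski_eq_imp) auto
  with \<open>z \<notin> F\<close> a inversion_F[OF a(1,2)] show False
    by (auto simp: algebra_simps)
qed

lemma closed_embedding_A2_joukowskiI:
  assumes "finite F" "k \<noteq> 0" "b \<in> F"
    and inversion_F: "\<And>a. a \<in> F \<Longrightarrow> a \<noteq> b \<Longrightarrow> b + k / (a - b) \<in> F"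
    and "regular_on (curve F) (fst \<circ> \<tau>)" "regular_on (curve F) (snd \<circ> \<tau>)"
    and t: "poly_in_coords (curve F) \<tau> (joukowski b k)"
    and s: "poly_in_coords (curve F) \<tau> (joukowski b (- k))"
    and inverse: "poly_in_coords (curve F) \<tau> (\<lambda>z. 1 / (\<Prod>c\<in>joukowski b k ` (F - {b}). joukowski b k z - c))"
  shows "closed_embedding_A2 (curve F) \<tau>"
proof (rule closed_embedding_A2I[OF \<open>finite F\<close> assms(5,6)])
  note z = poly_in_coords_from_joukowski_pair(1)[OF \<open>k \<noteq> 0\<close> t s]
  note inverse_b = poly_in_coords_from_joukowski_pair(2)[OF \<open>k \<noteq> 0\<close> t s]
  show "poly_in_coords (curve F) \<tau> (\<lambda>z. z)"
    by (fact z)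
  show "poly_in_coords (curve F) \<tau> (\<lambda>z. 1 / (z - a))" if "a \<in> F" for a
  proof (cases "a = b")
    case True
    with inverse_b show ?thesis
      by simp
  next
    case False
    have "poly_in_coords (curve F) \<tau> (\<lambda>z. 1 / (joukowski b k z - joukowski b k a))"
      using \<open>finite F\<close> \<open>a \<in> F\<close> False joukowski_notin_boundary_image[OF \<open>k \<noteq> 0\<close> \<open>b \<in> F\<close> _ inversion_F]
      by (intro poly_in_coords_inverse_linear_factor[OF t _ _ inverse]) auto
    then have "poly_in_coords (curve F) \<tau>
      (\<lambda>z. ((z - b) - k / (a - b)) * (1 / (z - b)) * (1 / (joukowski b k z - joukowski b k a)))"
      by (intro poly_in_coords_mult poly_in_coords_diff z poly_in_coords_const inverse_b)
    then show ?thesis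
    proof (rule poly_in_coords_cong)
      fix z assume "z \<in> curve F"
      then have "z \<noteq> a" "z \<noteq> b" "z \<noteq> b + k / (a - b)"
        using \<open>a \<in> F\<close> \<open>b \<in> F\<close> inversion_F[OF \<open>a \<in> F\<close> False] unfolding curve_def by auto
      then have "z - b \<noteq> 0" "z - b \<noteq> a - b" "z - b \<noteq> k / (a - b)"
        by (auto simp: algebra_simps)
      with False show "((z - b) - k / (a - b)) * (1 / (z - b)) * (1 / (joukowski b k z - joukowski b k a))
          = 1 / (z - a)"
        using inverse_diff_via_joukowski[of "z - b" "a - b" k] unfolding joukowski_def by simp
    qed
  qed
qed

lemma joukowski_discriminant_split:
  assumes "finite F" "b \<in> F" "k \<noteq> 0"
    and inversion_F: "\<And>a. a \<in> F \<Longrightarrow> a \<noteq> b \<Longrightarrow> b + k / (a - b) \<in> F"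
  obtains E1 E2 :: "complex poly"
  where "\<forall>z\<in>curve F. joukowski b (- k) z * joukowski b (- k) z
      = poly E1 (joukowski b k z) * poly E2 (joukowski b k z)"
    and "\<forall>z\<in>curve F. poly E1 (joukowski b k z) \<noteq> 0"
    and "coprime E2 (\<Prod>c\<in>joukowski b k ` (F - {b}). [:-c, 1:])"
proof -
  obtain E1 E2 where E: "\<And>x. poly E1 x * poly E2 x = x\<^sup>2 - 4 * k"
    and E1_roots: "\<And>x. poly E1 x = 0 \<Longrightarrow> x \<in> joukowski b k ` (F - {b})"
    and "coprime E2 (\<Prod>c\<in>joukowski b k ` (F - {b}). [:-c, 1:])"
    using square_minus_const_split[of "joukowski b k ` (F - {b})" "4 * k"] \<open>finite F\<close> \<open>k \<noteq> 0\<close> by auto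
  moreover have "\<forall>z\<in>curve F. joukowski b (- k) z * joukowski b (- k) z
      = poly E1 (joukowski b k z) * poly E2 (joukowski b k z)"
    using \<open>b \<in> F\<close> unfolding E curve_def by (auto intro!: joukowski_square)
  moreover have "\<forall>z\<in>curve F. poly E1 (joukowski b k z) \<noteq> 0"
    using E1_roots joukowski_notin_boundary_image[OF \<open>k \<noteq> 0\<close> \<open>b \<in> F\<close> _ inversion_F] by blast
  ultimately show ?thesis
    using that by blast
qed

lemma inversion_equivariant_embedding:
  assumes "finite F" "b \<in> F" "k \<noteq> 0" and maps: "\<sigma> ` curve F \<subseteq> curve F"
    and \<sigma>: "\<forall>z\<in>curve F. \<sigma> z = b + k / (z - b)"
  shows "\<exists>\<tau> \<Phi>. closed_embedding_A2 (curve F) \<tau> \<and> A2_involution \<Phi> \<and>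
           (\<forall>z\<in>curve F. \<Phi> (\<tau> z) = \<tau> (\<sigma> z))"
proof -
  have inversion_F: "b + k / (a - b) \<in> F" if "a \<in> F" "a \<noteq> b" for a
    using inversion_preserves_boundary[OF \<open>k \<noteq> 0\<close> maps \<sigma> that] .
  have "b \<notin> curve F"
    using \<open>b \<in> F\<close> unfolding curve_def by simp
  define t where "t = joukowski b k"
  define s where "s = joukowski b (- k)"
  define R where "R = (\<Prod>c\<in>t ` (F - {b}). [:-c, 1:])"
  obtain E1 E2 where square: "\<forall>z\<in>curve F. s z * s z = poly E1 (t z) * poly E2 (t z)"
    and E1_nonzero: "\<forall>z\<in>curve F. poly E1 (t z) \<noteq> 0" and "coprime E2 R"
    using joukowski_discriminant_split[OF \<open>finite F\<close> \<open>b \<in> F\<close> \<open>k \<noteq> 0\<close> inversion_F]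
    unfolding s_def t_def R_def by blast
  have R_nonzero: "\<forall>z\<in>curve F. poly R (t z) \<noteq> 0"
    using joukowski_notin_boundary_image[OF \<open>k \<noteq> 0\<close> \<open>b \<in> F\<close> _ inversion_F] \<open>finite F\<close>
    unfolding R_def t_def by (auto simp: poly_prod prod_zero_iff)
  \<comment> \<open>Dividing by \<open>R(t)\<close> makes \<open>1 / R(t)\<close>, and with it every \<open>1 / (z - a)\<close>, a polynomial
    in the coordinates; \<open>E1\<close> strips from \<open>s\<^sup>2 = E1(t) E2(t)\<close> the roots shared with \<open>R\<close>, so that
    \<open>x s = E2(t) / R(t)\<close> with \<open>E2\<close> coprime to \<open>R\<close>.\<close>
  define \<tau> where "\<tau> = (\<lambda>z. (s z / (poly R (t z) * poly E1 (t z)), t z))"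
  have "(\<lambda>(x, y). (0 - x, 1 * y)) (\<tau> z) = \<tau> (\<sigma> z)" if "z \<in> curve F" for z
  proof -
    from that \<open>b \<notin> curve F\<close> have "z \<noteq> b"
      by auto
    with \<sigma> that show ?thesis
      using joukowski_inversion[OF \<open>k \<noteq> 0\<close>] unfolding \<tau>_def s_def t_def by simp
  qed
  moreover have "closed_embedding_A2 (curve F) \<tau>"
  proof (rule closed_embedding_A2_joukowskiI[OF \<open>finite F\<close> \<open>k \<noteq> 0\<close> \<open>b \<in> F\<close> inversion_F])
    have t_regular: "regular_on (curve F) t" and s_regular: "regular_on (curve F) s"
      unfolding t_def s_def using regular_on_joukowski[OF \<open>b \<notin> curve F\<close>] by blast+
    then show "regular_on (curve F) (fst \<circ> \<tau>)"
      using R_nonzero E1_nonzero unfolding \<tau>_def o_def fst_conv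
      by (intro regular_on_divide regular_on_mult regular_on_poly) auto
    from t_regular show "regular_on (curve F) (snd \<circ> \<tau>)"
      unfolding \<tau>_def o_def by simp
    show "poly_in_coords (curve F) \<tau> (joukowski b k)"
      using poly_in_coords_snd[of "curve F" \<tau>] unfolding \<tau>_def t_def by simp
    have \<tau>_eq: "\<forall>z\<in>curve F. \<tau> z = (s z / (poly R (t z) * poly E1 (t z)), t z)"
      unfolding \<tau>_def by simp
    show "poly_in_coords (curve F) \<tau> (joukowski b (- k))"
      and "poly_in_coords (curve F) \<tau> (\<lambda>z. 1 / (\<Prod>c\<in>joukowski b k ` (F - {b}). joukowski b k z - c))"
      using poly_in_coords_quadratic_cover[OF \<tau>_eq square \<open>coprime E2 R\<close> R_nonzero E1_nonzero]
      unfolding s_def R_def t_def by (simp_all add: poly_prod)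
  qed
  ultimately show ?thesis
    using A2_involution_reflection[of 1 0] by auto
qed

theorem mainTheorem7:
  fixes F :: "complex set" and \<sigma> :: "complex \<Rightarrow> complex"
  assumes "finite F"
    and "curve_involution (curve F) \<sigma>"
  shows "\<exists>\<tau> \<Phi>. closed_embedding_A2 (curve F) \<tau> \<and> A2_involution \<Phi> \<and>
           (\<forall>z\<in>curve F. \<Phi> (\<tau> z) = \<tau> (\<sigma> z))"
proof -
  have maps: "\<sigma> ` curve F \<subseteq> curve F"
    using assms(2) unfolding curve_involution_def curve_aut_def curve_morphism_def by blast
  from assms show ?thesis
  proof (cases rule: curve_involution_cases)
    case (point_reflection c)
    with \<open>finite F\<close> maps show ?thesis
      by (rule point_reflection_equivariant_embedding)
  next
    case (inversion b k)
    with \<open>finite F\<close> maps show ?thesis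
      by (intro inversion_equivariant_embedding) auto
  qed
qed

end
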